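(* Let $P\in N_1$ be a sum of $8$ monomials, not necessarily distinct (i.e. $P(1)=8$). Then $P$ has unique factorisation inside $N_1$: any two factorisations of $P$ into irreducible elements of $N_1$ coincide up to the order of the factors.
   Context: $N_1=\mathbb{Z}_{\ge0}[X]$ is the semiring of univariate polynomials with nonnegative integer coefficients. An element $Q\neq0,1$ of $N_1$ is irreducible if in every factorisation $Q=ST$ with $S,T\in N_1$ one of $S,T$ is $1$. *)

theory Defs
  imports "HOL-Computational_Algebra.Polynomial" "HOL-Library.Multiset"
begin

text \<open>N_1 = Z_{>=0}[X] is modelled by the type nat poly.\<close>

definition N1_irreducible :: "nat poly \<Rightarrow> bool" where
  "N1_irreducible Q \<longleftrightarrow> Q \<noteq> 0 \<and> Q \<noteq> 1 \<and> (\<forall>S T. Q = S * T \<longrightarrow> S = 1 \<or> T = 1)"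

definition N1_unique_factorisation :: "nat poly \<Rightarrow> bool" where
  "N1_unique_factorisation P \<longleftrightarrow>
     (\<forall>A B. (\<forall>x\<in>#A. N1_irreducible x) \<longrightarrow> (\<forall>x\<in>#B. N1_irreducible x) \<longrightarrow>
            prod_mset A = P \<longrightarrow> prod_mset B = P \<longrightarrow> A = B)"

end

theory Submission
  imports Defs
begin

text \<open>
  A polynomial in \<open>N\<^sub>1\<close> is the sum of the monomials \<open>X\<^sup>k\<close> for \<open>k\<close> ranging over a multiset of
  exponents, and \<open>P(1)\<close> is the size of that multiset. An irreducible factor is either \<open>X\<close>, or has
  nonzero constant term and value at least \<open>2\<close> at \<open>1\<close>. The power of \<open>X\<close> in a factorisation is the
  least exponent of \<open>P\<close>; the remaining factors have values \<open>8\<close>, \<open>2 \<cdot> 4\<close> or \<open>2 \<cdot> 2 \<cdot> 2\<close>.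
  Factors of value \<open>2\<close> are binomials \<open>1 + X\<^sup>u\<close>, irreducible ones of value \<open>4\<close> are
  \<open>1 + X\<^sup>p + X\<^sup>q + X\<^sup>r\<close> with \<open>p \<le> q \<le> r \<noteq> p + q\<close>, and multiplying by \<open>1 + X\<^sup>a\<close> turns an exponent
  multiset \<open>M\<close> into \<open>M + (a + M)\<close>. Comparing least and greatest exponents of two such products,
  and of their mirror images under \<open>x \<mapsto> deg - x\<close>, determines all exponents of the factors.
\<close>

lemma size_3_mset_sorted:
  fixes M :: "'a::linorder multiset"
  assumes "size M = 3"
  obtains p q r where "p \<le> q" "q \<le> r" "M = {#p, q, r#}"
proof -
  have "length (sorted_list_of_multiset M) = 3"
    using assms by (metis size_mset mset_sorted_list_of_multiset)
  then obtain p q r where pqr: "sorted_list_of_multiset M = [p, q, r]"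
    by (auto simp: numeral_3_eq_3 length_Suc_conv)
  then have "sorted [p, q, r]" by (metis sorted_sorted_list_of_multiset)
  moreover have "M = mset [p, q, r]" by (metis pqr mset_sorted_list_of_multiset)
  ultimately show thesis using that by auto
qed

lemma size_le_3_mset_cases:
  assumes "size M \<le> 3"
  obtains "M = {#}" | v where "M = {#v#}" | v w where "M = {#v, w#}" | v w z where "M = {#v, w, z#}"
proof -
  obtain xs where "M = mset xs" using ex_mset by metis
  moreover have "length xs \<le> 3" using assms calculation by simp
  ultimately show thesis using that
    by (cases xs rule: remdups_adj.cases) (auto simp: numeral_3_eq_3 le_Suc_eq length_Suc_conv)
qed

lemma image_mset_eq_mset:
  assumes "image_mset f M = mset ys"
  obtains xs where "M = mset xs" "map f xs = ys"
  using assms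
proof (induction ys arbitrary: M thesis)
  case Nil
  then show ?case by simp
next
  case (Cons y ys)
  then obtain x M' where "M = add_mset x M'" "f x = y" "image_mset f M' = mset ys"
    using msed_map_invR[of f M y "mset ys"] by auto
  moreover obtain xs where "M' = mset xs" "map f xs = ys"
    using Cons.IH calculation(3) by blast
  ultimately show ?case using Cons.prems(1)[of "x # xs"] by simp
qed

lemma pair_mset_eq_iff: "{#x, y#} = {#u, v#} \<longleftrightarrow> (x = u \<and> y = v) \<or> (x = v \<and> y = u)"
  by (auto simp: add_eq_conv_diff)

lemma prod_mset_eq_8_cases:
  fixes V :: "nat multiset"
  assumes ge2: "\<forall>v\<in>#V. 2 \<le> v" and prod: "prod_mset V = 8"
  shows "V = {#8#} \<or> V = {#2, 4#} \<or> V = {#2, 2, 2#}"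
proof -
  have "2 ^ size V \<le> prod_mset V"
    using ge2 by (induction V) (auto intro: mult_mono)
  then have "2 ^ size V \<le> (2 :: nat) ^ 3" using prod by simp
  then have "size V \<le> 3" by (simp only: power_increasing_iff)
  then show ?thesis
  proof (cases rule: size_le_3_mset_cases)
    case 1 then show ?thesis using prod by simp
  next
    case 2 then show ?thesis using prod by simp
  next
    case (3 v w)
    then have vw: "v * w = 8" "2 \<le> v" "2 \<le> w" using prod ge2 by auto
    then have "v * 2 \<le> 8" by (metis mult_le_mono2)
    then have "v = 2 \<or> v = 3 \<or> v = 4" using vw by linarith
    then have "v = 2 \<and> w = 4 \<or> v = 4 \<and> w = 2" using vw by (elim disjE) (simp_all, presburger)
    then show ?thesis using 3 by (auto simp: add_mset_commute)
  next
    case (4 v w z)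
    then have vwz: "v * (w * z) = 8" "2 \<le> v" "2 \<le> w" "2 \<le> z" using prod ge2 by auto
    then have "2 * 2 \<le> w * z" by (intro mult_le_mono) auto
    then have "v * 4 \<le> v * (w * z)" by simp
    then have v: "v = 2" using vwz by linarith
    have "w * 2 \<le> w * z" using vwz by simp
    moreover have "w * z = 4" using vwz v by simp
    ultimately have w: "w = 2" using vwz by linarith
    then have "z = 2" using vwz v by simp
    then show ?thesis using 4 v w by simp
  qed
qed

lemma monom_1_mult_cancel:
  fixes F G :: "'a::comm_semiring_1 poly"
  assumes eq: "monom 1 n * F = monom 1 m * G" and "coeff F 0 \<noteq> 0" "coeff G 0 \<noteq> 0"
  shows "n = m \<and> F = G"
proof -
  have le: "m \<le> n" if "monom 1 n * F = monom 1 m * G" "coeff F 0 \<noteq> 0" for n m and F G :: "'a poly"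
    using arg_cong[OF that(1), of "\<lambda>P. coeff P n"] that(2) by (auto simp: coeff_monom_mult split: if_splits)
  have "n = m" using le[OF eq assms(2)] le[OF eq[symmetric] assms(3)] by simp
  moreover have "F = G"
  proof (rule poly_eqI)
    fix k
    show "coeff F k = coeff G k"
      using arg_cong[OF eq, of "\<lambda>P. coeff P (n + k)"] \<open>n = m\<close> by (simp add: coeff_monom_mult)
  qed
  ultimately show ?thesis by simp
qed

definition poly_of_mset :: "nat multiset \<Rightarrow> nat poly" where
  "poly_of_mset M = (\<Sum>k\<in>#M. monom 1 k)"

lemma poly_of_mset_empty [simp]: "poly_of_mset {#} = 0"
  by (simp add: poly_of_mset_def)

lemma poly_of_mset_add_mset [simp]: "poly_of_mset (add_mset k M) = monom 1 k + poly_of_mset M"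
  by (simp add: poly_of_mset_def)

lemma poly_of_mset_union [simp]: "poly_of_mset (M + N) = poly_of_mset M + poly_of_mset N"
  by (simp add: poly_of_mset_def)

lemma coeff_poly_of_mset [simp]: "coeff (poly_of_mset M) k = count M k"
  by (induction M) (auto simp: coeff_monom)

lemma poly_of_mset_eq_iff [simp]: "poly_of_mset M = poly_of_mset N \<longleftrightarrow> M = N"
  by (metis coeff_poly_of_mset multiset_eqI poly_eqI)

lemma poly_of_mset_eq_1_iff [simp]: "poly_of_mset M = 1 \<longleftrightarrow> M = {#0#}"
  by (metis poly_of_mset_eq_iff poly_of_mset_add_mset poly_of_mset_empty add_0_right monom_0 one_pCons)

lemma poly_poly_of_mset_1: "poly (poly_of_mset M) 1 = size M"
  by (induction M) (auto simp: poly_monom)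

text \<open>The simplifier rewrites \<open>1 :: nat\<close> to \<open>Suc 0\<close>, so the simp rule has to be stated in that form.\<close>

lemmas poly_poly_of_mset_Suc_0 [simp] = poly_poly_of_mset_1[unfolded One_nat_def]

lemma ex_poly_of_mset: obtains M where "Q = poly_of_mset M"
proof -
  have "finite {k. 0 < coeff Q k}"
    by (rule finite_subset[of _ "{..degree Q}"]) (auto intro: le_degree)
  then have "Q = poly_of_mset (Abs_multiset (coeff Q))"
    by (intro poly_eqI) simp
  then show thesis by (rule that)
qed

lemma monom_mult_poly_of_mset: "monom 1 u * poly_of_mset M = poly_of_mset (image_mset ((+) u) M)"
  by (induction M) (auto simp: distrib_left mult_monom)

definition binom_exps :: "nat \<Rightarrow> nat multiset \<Rightarrow> nat multiset" where
  "binom_exps u M = M + image_mset ((+) u) M"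

lemma poly_of_mset_binom_mult:
  "poly_of_mset {#0, u#} * poly_of_mset M = poly_of_mset (binom_exps u M)"
  by (simp add: binom_exps_def distrib_right monom_0 monom_mult_poly_of_mset del: One_nat_def)

lemma N1_irreducible_not_unit:
  assumes "N1_irreducible Q"
  shows "\<not> Q dvd 1"
proof
  assume "Q dvd 1"
  then obtain c where "Q = [:c:]" "c dvd 1" by (auto simp: is_unit_poly_iff)
  then show False using assms by (simp add: N1_irreducible_def one_pCons)
qed

lemma prod_mset_N1_irreducible_eq_1:
  assumes "\<forall>x\<in>#B. N1_irreducible x" "prod_mset B = 1"
  shows "B = {#}"
proof (rule ccontr)
  assume "B \<noteq> {#}"
  then obtain x where "x \<in># B" by blast
  then have "x dvd prod_mset B" by (rule dvd_prod_mset)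
  then show False using assms \<open>x \<in># B\<close> N1_irreducible_not_unit by auto
qed

lemma prod_mset_eq_N1_irreducible:
  assumes "N1_irreducible Q" "\<forall>x\<in>#B. N1_irreducible x" "prod_mset B = Q"
  shows "B = {#Q#}"
proof -
  have "B \<noteq> {#}" using assms by (auto simp: N1_irreducible_def)
  then obtain x B' where B: "B = add_mset x B'" by (metis multiset_cases)
  have "x \<noteq> 1" using assms(2) B by (auto simp: N1_irreducible_def)
  then have "prod_mset B' = 1" using assms B by (auto simp: N1_irreducible_def)
  then have "B' = {#}" using prod_mset_N1_irreducible_eq_1 assms(2) B by auto
  then show ?thesis using B assms(3) by simp
qed

lemma N1_irreducible_coeff_0:
  assumes "N1_irreducible Q" "Q \<noteq> monom 1 1"
  shows "coeff Q 0 \<noteq> 0"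
proof
  assume "coeff Q 0 = 0"
  then have "monom 1 1 dvd Q" using monom_1_dvd_iff'[of 1 Q] by simp
  then obtain R where "Q = monom 1 1 * R" by (rule dvdE)
  moreover have "monom 1 1 \<noteq> (1 :: nat poly)" by (simp add: monom_eq_1_iff)
  ultimately have "R = 1" using assms(1) by (auto simp: N1_irreducible_def)
  then show False using \<open>Q = monom 1 1 * R\<close> assms(2) by simp
qed

lemma N1_irreducible_exps:
  assumes "N1_irreducible Q" "Q \<noteq> monom 1 1"
  obtains M where "Q = poly_of_mset M" "0 \<in># M" "2 \<le> size M"
proof -
  obtain M where M: "Q = poly_of_mset M" by (rule ex_poly_of_mset)
  have "0 \<in># M" using N1_irreducible_coeff_0[OF assms] M by simp
  moreover have "size M \<noteq> 1"
  proof
    assume "size M = 1"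
    then obtain x where "M = {#x#}" using size_1_singleton_mset by auto
    then have "M = {#0#}" using \<open>0 \<in># M\<close> by simp
    then have "Q = 1" using M poly_of_mset_eq_1_iff by blast
    then show False using assms(1) by (simp add: N1_irreducible_def)
  qed
  moreover have "size M \<noteq> 0" using \<open>0 \<in># M\<close> by auto
  ultimately have "2 \<le> size M" by (simp del: size_eq_0_iff_empty)
  then show thesis using that M \<open>0 \<in># M\<close> by blast
qed

lemma N1_irreducible_value_ge_2:
  assumes "N1_irreducible Q" "Q \<noteq> monom 1 1"
  shows "2 \<le> poly Q 1"
  using assms by (rule N1_irreducible_exps) (simp add: poly_poly_of_mset_1)

lemma N1_irreducible_value_2:
  assumes "N1_irreducible Q" "Q \<noteq> monom 1 1" "poly Q 1 = 2"
  obtains u where "Q = poly_of_mset {#0, u#}"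
proof -
  obtain M where M: "Q = poly_of_mset M" "0 \<in># M" by (rule N1_irreducible_exps[OF assms(1,2)])
  then obtain M' where M': "M = add_mset 0 M'" by (metis multi_member_split)
  have "size M = 2" using assms(3) M by (simp add: poly_poly_of_mset_1)
  then have "size M' = 1" using M' by simp
  then obtain u where "M' = {#u#}" using size_1_singleton_mset by blast
  then show thesis using that M M' by blast
qed

lemma N1_irreducible_value_4:
  assumes "N1_irreducible Q" "Q \<noteq> monom 1 1" "poly Q 1 = 4"
  obtains p q r where "p \<le> q" "q \<le> r" "r \<noteq> p + q" "Q = poly_of_mset {#0, p, q, r#}"
proof -
  obtain M where M: "Q = poly_of_mset M" "0 \<in># M" by (rule N1_irreducible_exps[OF assms(1,2)])
  then obtain M' where M': "M = add_mset 0 M'" by (metis multi_member_split)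
  have "size M = 4" using assms(3) M by (simp add: poly_poly_of_mset_1)
  then have "size M' = 3" using M' by simp
  then obtain p q r where pqr: "p \<le> q" "q \<le> r" "M' = {#p, q, r#}" by (rule size_3_mset_sorted)
  have "r \<noteq> p + q"
  proof
    assume "r = p + q"
    then have "Q = poly_of_mset {#0, p#} * poly_of_mset {#0, q#}"
      using M M' pqr by (simp only: poly_of_mset_binom_mult) (simp add: binom_exps_def add_mset_commute)
    moreover have "poly_of_mset {#0, p#} \<noteq> 1" "poly_of_mset {#0, q#} \<noteq> 1"
      by (simp_all only: poly_of_mset_eq_1_iff) simp_all
    ultimately show False using assms(1) by (auto simp: N1_irreducible_def)
  qed
  then show thesis using that pqr M M' by simp
qed

lemma N1_factorisation_split_X:
  assumes "\<forall>x\<in>#A. N1_irreducible x"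
  obtains n A' where "A = replicate_mset n (monom 1 1) + A'"
    "\<forall>x\<in>#A'. N1_irreducible x \<and> x \<noteq> monom 1 1"
    "prod_mset A = monom 1 n * prod_mset A'" "coeff (prod_mset A') 0 \<noteq> 0"
proof -
  define A' where "A' = filter_mset (\<lambda>x. x \<noteq> monom 1 1) A"
  have split: "A = replicate_mset (count A (monom 1 1)) (monom 1 1) + A'"
    unfolding A'_def using multiset_partition[of A "\<lambda>x. x = monom 1 1"]
    by (simp add: filter_eq_replicate_mset)
  have A': "\<forall>x\<in>#A'. N1_irreducible x \<and> x \<noteq> monom 1 1" using assms unfolding A'_def by auto
  have prod: "prod_mset A = monom 1 (count A (monom 1 1)) * prod_mset A'"
    by (subst split) (simp add: monom_power)
  have "\<forall>x\<in>#A'. coeff x 0 \<noteq> 0" using A' N1_irreducible_coeff_0 by blast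
  then have "coeff (prod_mset A') 0 \<noteq> 0"
    using poly_prod_mset[of "\<lambda>x. x" A' 0] by (auto simp: poly_0_coeff_0 prod_mset_zero_iff)
  with split A' prod show thesis by (rule that)
qed

lemma Min_binom_exps: "M \<noteq> {#} \<Longrightarrow> Min_mset (binom_exps u M) = Min_mset M"
  unfolding binom_exps_def
  by (rule Min_eqI) (auto intro: Min_le order.trans[OF Min_le] simp: Min_in)

lemma binom_exps_eq_iff [simp]: "binom_exps u M = binom_exps u N \<longleftrightarrow> M = N"
proof
  show "binom_exps u M = binom_exps u N \<Longrightarrow> M = N"
  proof (induction "size M" arbitrary: M N rule: less_induct)
    case less
    show ?case
    proof (cases "M = {#}")
      case True
      then show ?thesis using less.prems by (simp add: binom_exps_def)
    next
      case False
      then have "N \<noteq> {#}" using less.prems by (auto simp: binom_exps_def)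
      define m where "m = Min_mset M"
      have "Min_mset N = m"
        using Min_binom_exps[OF False] Min_binom_exps[OF \<open>N \<noteq> {#}\<close>] less.prems m_def by metis
      then obtain M' N' where M': "M = add_mset m M'" and N': "N = add_mset m N'"
        using False \<open>N \<noteq> {#}\<close> m_def by (metis Min_in finite_set_mset set_mset_eq_empty_iff multi_member_split)
      have "binom_exps u M' = binom_exps u N'"
        using less.prems unfolding M' N' binom_exps_def by (simp add: add_mset_commute)
      then show ?thesis using less.hyps[of M' N'] M' N' by simp
    qed
  qed
qed simp

lemma binom_exps_reflect:
  assumes "\<forall>x\<in>#M. x \<le> t"
  shows "image_mset (\<lambda>x. u + t - x) (binom_exps u M) = binom_exps u (image_mset (\<lambda>x. t - x) M)"
  using assms unfolding binom_exps_def by (induction M) (auto simp: add_mset_commute)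

lemma binom_exps_quartic_min:
  fixes a c p q r p' q' r' :: nat
  assumes "binom_exps a {#0,p,q,r#} = binom_exps c {#0,p',q',r'#}"
    and "p \<le> q" "q \<le> r" "p' \<le> q'" "q' \<le> r'"
  shows "min p a = min p' c"
proof -
  have "{#0,p,q,r,a,a+p,a+q,a+r#} = {#0,p',q',r',c,c+p',c+q',c+r'#}"
    using assms(1) by (simp add: binom_exps_def add_mset_commute)
  then have "Min_mset {#p,q,r,a,a+p,a+q,a+r#} = Min_mset {#p',q',r',c,c+p',c+q',c+r'#}"
    by simp
  then show ?thesis using assms(2-) by (auto simp: min_def split: if_splits)
qed

lemma binom_exps_quartic_max:
  fixes a c p q r p' q' r' :: nat
  assumes "binom_exps a {#0,p,q,r#} = binom_exps c {#0,p',q',r'#}"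
    and "p \<le> q" "q \<le> r" "p' \<le> q'" "q' \<le> r'"
  shows "a + r = c + r'"
proof -
  have "Max_mset (binom_exps a {#0,p,q,r#}) = Max_mset (binom_exps c {#0,p',q',r'#})"
    using assms(1) by simp
  then show ?thesis using assms(2-) by (auto simp: binom_exps_def max_def split: if_splits)
qed

lemma binom_exps_quartic_reflect:
  fixes a c p q r p' q' r' :: nat
  assumes E: "binom_exps a {#0,p,q,r#} = binom_exps c {#0,p',q',r'#}"
    and s: "p \<le> q" "q \<le> r" "p' \<le> q'" "q' \<le> r'"
  shows "binom_exps a {#0,r-q,r-p,r#} = binom_exps c {#0,r'-q',r'-p',r'#}"
proof -
  have top: "a + r = c + r'" using binom_exps_quartic_max[OF E s] .
  have "binom_exps a (image_mset (\<lambda>x. r - x) {#0,p,q,r#})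
      = image_mset (\<lambda>x. a + r - x) (binom_exps a {#0,p,q,r#})"
    using s by (intro binom_exps_reflect[symmetric]) auto
  also have "\<dots> = image_mset (\<lambda>x. c + r' - x) (binom_exps c {#0,p',q',r'#})"
    using E top by simp
  also have "\<dots> = binom_exps c (image_mset (\<lambda>x. r' - x) {#0,p',q',r'#})"
    using s by (intro binom_exps_reflect) auto
  finally show ?thesis by (simp add: add_mset_commute)
qed

lemma binom_exps_quartic_lt_imp_le:
  fixes a c p q r p' q' r' :: nat
  assumes E: "binom_exps a {#0,p,q,r#} = binom_exps c {#0,p',q',r'#}"
    and s: "p \<le> q" "q \<le> r" "p' \<le> q'" "q' \<le> r'" and irr: "r \<noteq> p+q" "r' \<noteq> p'+q'"
    and "a < c"
  shows "a \<le> p"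
proof (rule ccontr)
  assume "\<not> a \<le> p"
  then have "p' = p"
    using binom_exps_quartic_min[OF E s] \<open>a < c\<close> by (auto simp: min_def split: if_splits)
  then have E1: "{#q,r,a,a+p,a+q,a+r#} = {#q',r',c,c+p,c+q',c+r'#}"
    using E by (simp add: binom_exps_def add_mset_commute)
  have top: "a + r = c + r'" using binom_exps_quartic_max[OF E s] .
  have "Min_mset {#q,r,a,a+p,a+q,a+r#} = Min_mset {#q',r',c,c+p,c+q',c+r'#}"
    using E1 by simp
  then have min2: "min q a = min q' c" using s \<open>p' = p\<close> by (auto simp: min_def split: if_splits)
  have sum: "q + r + a + (a+p) + (a+q) + (a+r) = q' + r' + c + (c+p) + (c+q') + (c+r')"
    using arg_cong[OF E1, of sum_mset] by simp
  show False
  proof (cases "q \<le> a")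
    case True
    then have "q' = q" using min2 \<open>a < c\<close> by (auto simp: min_def split: if_splits)
    then show False using sum top \<open>a < c\<close> by simp
  next
    case False
    then have "q' = a" using min2 \<open>a < c\<close> by (auto simp: min_def split: if_splits)
    then have "q = c" using sum top by simp
    then have "{#r, a+p#} = {#r', c+p#}"
      using E1 \<open>q' = a\<close> top by (simp add: add.commute add_mset_commute)
    then show False using top \<open>a < c\<close> irr \<open>q = c\<close> by (auto simp: pair_mset_eq_iff)
  qed
qed

lemma binom_exps_quartic_not_lt:
  fixes a c p q r p' q' r' :: nat
  assumes E: "binom_exps a {#0,p,q,r#} = binom_exps c {#0,p',q',r'#}"
    and s: "p \<le> q" "q \<le> r" "p' \<le> q'" "q' \<le> r'" and irr: "r \<noteq> p+q" "r' \<noteq> p'+q'"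
  shows "\<not> a < c"
proof
  assume "a < c"
  have E': "binom_exps a {#0,r-q,r-p,r#} = binom_exps c {#0,r'-q',r'-p',r'#}"
    using binom_exps_quartic_reflect[OF E s] .
  have s': "r - q \<le> r - p" "r - p \<le> r" "r' - q' \<le> r' - p'" "r' - p' \<le> r'" using s by auto
  have irr': "r \<noteq> (r-q) + (r-p)" "r' \<noteq> (r'-q') + (r'-p')" using s irr by auto
  have "a \<le> p" "a \<le> r - q"
    using binom_exps_quartic_lt_imp_le[OF E s irr] binom_exps_quartic_lt_imp_le[OF E' s' irr'] \<open>a < c\<close>
    by simp_all
  then have "p' = a" "r' - q' = a"
    using binom_exps_quartic_min[OF E s] binom_exps_quartic_min[OF E' s'] \<open>a < c\<close>
    by (auto simp: min_def split: if_splits)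
  then show False using irr s by auto
qed

lemma binom_exps_quartic_unique:
  fixes a c p q r p' q' r' :: nat
  assumes E: "binom_exps a {#0,p,q,r#} = binom_exps c {#0,p',q',r'#}"
    and s: "p \<le> q" "q \<le> r" "p' \<le> q'" "q' \<le> r'" and irr: "r \<noteq> p+q" "r' \<noteq> p'+q'"
  shows "a = c \<and> {#0,p,q,r#} = {#0,p',q',r'#}"
proof -
  have "a = c"
    using binom_exps_quartic_not_lt[OF E s irr] binom_exps_quartic_not_lt[OF E[symmetric] s(3,4,1,2) irr(2,1)]
    by linarith
  then show ?thesis using E by simp
qed

lemma binom_exps_quartic_ne_triple:
  fixes a b c d p q r :: nat
  assumes s: "p \<le> q" "q \<le> r" and irr: "r \<noteq> p + q" and "b \<le> c" "c \<le> d"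
  shows "binom_exps a {#0,p,q,r#} \<noteq> binom_exps b (binom_exps c {#0,d#})"
proof
  assume "binom_exps a {#0,p,q,r#} = binom_exps b (binom_exps c {#0,d#})"
  then have E: "binom_exps a {#0,p,q,r#} = binom_exps b {#0,c,d,c+d#}"
    by (simp add: binom_exps_def add_mset_commute)
  have s': "c \<le> d" "d \<le> c + d" using \<open>c \<le> d\<close> by simp_all
  have "min p a = b"
    using binom_exps_quartic_min[OF E s s'] \<open>b \<le> c\<close> by simp
  moreover have "min (r - q) a = b"
    using binom_exps_quartic_min[OF binom_exps_quartic_reflect[OF E s s']] s s' \<open>b \<le> c\<close> by simp
  moreover have "a \<noteq> b"
  proof
    assume "a = b"
    then have E': "{#0,p,q,r#} = {#0,c,d,c+d#}" using E by simp
    then have "Min_mset {#p,q,r#} = Min_mset {#c,d,c+d#}" by simp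
    then have "p = c" using s s' by (simp add: min_def)
    then have "{#q,r#} = {#d,c+d#}" using E' by simp
    then show False using s irr \<open>p = c\<close> by (auto simp: pair_mset_eq_iff)
  qed
  ultimately show False using s irr by (auto simp: min_def split: if_splits)
qed

lemma binom_exps_triple_unique:
  fixes a b c d e f :: nat
  assumes E: "binom_exps a (binom_exps b {#0,c#}) = binom_exps d (binom_exps e {#0,f#})"
    and s: "a \<le> b" "b \<le> c" "d \<le> e" "e \<le> f"
  shows "a = d \<and> b = e \<and> c = f"
proof -
  have "{#0,c,b,b+c,a,a+c,a+b,a+(b+c)#} = {#0,f,e,e+f,d,d+f,d+e,d+(e+f)#}"
    using E by (simp add: binom_exps_def add_mset_commute add.assoc)
  then have "Min_mset {#c,b,b+c,a,a+c,a+b,a+(b+c)#} = Min_mset {#f,e,e+f,d,d+f,d+e,d+(e+f)#}"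
    by simp
  then have "a = d" using s by (auto simp: min_def split: if_splits)
  then have E1: "binom_exps b {#0,c#} = binom_exps e {#0,f#}" using E by simp
  then have "{#0,c,b,b+c#} = {#0,f,e,e+f#}" by (simp add: binom_exps_def add_mset_commute)
  then have "Min_mset {#c,b,b+c#} = Min_mset {#f,e,e+f#}" by simp
  then have "b = e" using s by (auto simp: min_def split: if_splits)
  then show ?thesis using E1 \<open>a = d\<close> by simp
qed

lemma X_free_factorisation_value_8_cases:
  assumes A: "\<forall>x\<in>#A. N1_irreducible x \<and> x \<noteq> monom 1 1" and val: "poly (prod_mset A) 1 = 8"
  obtains (single) Q where "A = {#Q#}"
  | (pair) a p q r where "p \<le> q" "q \<le> r" "r \<noteq> p + q"
      "A = {#poly_of_mset {#0, a#}, poly_of_mset {#0, p, q, r#}#}"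
      "prod_mset A = poly_of_mset (binom_exps a {#0, p, q, r#})"
  | (triple) a b c where "a \<le> b" "b \<le> c"
      "A = {#poly_of_mset {#0, a#}, poly_of_mset {#0, b#}, poly_of_mset {#0, c#}#}"
      "prod_mset A = poly_of_mset (binom_exps a (binom_exps b {#0, c#}))"
proof -
  let ?V = "image_mset (\<lambda>x. poly x 1) A"
  have value_2: "\<exists>u. x = poly_of_mset {#0, u#}" if "x \<in># A" "poly x 1 = 2" for x
    using N1_irreducible_value_2[of x] A that by metis
  have "\<forall>v\<in>#?V. 2 \<le> v" using A N1_irreducible_value_ge_2 by auto
  moreover have "prod_mset ?V = 8" using val poly_prod_mset[of "\<lambda>x. x" A 1] by simp
  ultimately have "?V = mset [8] \<or> ?V = mset [2, 4] \<or> ?V = mset [2, 2, 2]"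
    unfolding mset.simps by (rule prod_mset_eq_8_cases)
  then consider "?V = mset [8]" | "?V = mset [2, 4]" | "?V = mset [2, 2, 2]" by blast
  then show thesis
  proof cases
    case 1
    then obtain xs where "A = mset xs" "map (\<lambda>x. poly x 1) xs = [8]" by (rule image_mset_eq_mset)
    then show thesis using single by (auto simp: map_eq_Cons_conv)
  next
    case 2
    then obtain xs where "A = mset xs" "map (\<lambda>x. poly x 1) xs = [2, 4]" by (rule image_mset_eq_mset)
    then obtain x y where xy: "A = {#x, y#}" "poly x 1 = 2" "poly y 1 = 4"
      by (auto simp: map_eq_Cons_conv)
    then obtain a where "x = poly_of_mset {#0, a#}" using value_2 by auto
    moreover obtain p q r where "p \<le> q" "q \<le> r" "r \<noteq> p + q" "y = poly_of_mset {#0, p, q, r#}"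
      using N1_irreducible_value_4[of y] A xy by auto
    ultimately show thesis using pair xy by (simp add: poly_of_mset_binom_mult del: poly_of_mset_add_mset)
  next
    case 3
    then obtain xs where "A = mset xs" "map (\<lambda>x. poly x 1) xs = [2, 2, 2]" by (rule image_mset_eq_mset)
    then obtain x y z where xyz: "A = {#x, y, z#}" "poly x 1 = 2" "poly y 1 = 2" "poly z 1 = 2"
      by (auto simp: map_eq_Cons_conv)
    obtain u v w where "x = poly_of_mset {#0, u#}" "y = poly_of_mset {#0, v#}" "z = poly_of_mset {#0, w#}"
      using value_2 xyz by (metis union_single_eq_member add_mset_commute)
    then have "A = image_mset (\<lambda>u. poly_of_mset {#0, u#}) {#u, v, w#}" using xyz(1) by simp
    moreover obtain a b c where "a \<le> b" "b \<le> c" "{#u, v, w#} = {#a, b, c#}"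
      using size_3_mset_sorted[of "{#u, v, w#}"] by auto
    ultimately show thesis using triple
      by (simp add: mult.assoc poly_of_mset_binom_mult del: poly_of_mset_add_mset)
  qed
qed

lemma X_free_factorisation_value_8_unique:
  assumes A: "\<forall>x\<in>#A. N1_irreducible x \<and> x \<noteq> monom 1 1"
    and B: "\<forall>x\<in>#B. N1_irreducible x \<and> x \<noteq> monom 1 1"
    and eq: "prod_mset A = prod_mset B" and val: "poly (prod_mset A) 1 = 8"
  shows "A = B"
proof -
  have single_unique: "Y = X" if "X = {#Q#}" "\<forall>x\<in>#X. N1_irreducible x" "\<forall>x\<in>#Y. N1_irreducible x"
    "prod_mset X = prod_mset Y" for X Y Q
    using prod_mset_eq_N1_irreducible[of Q Y] that by simp
  from A val show ?thesis
  proof (cases rule: X_free_factorisation_value_8_cases)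
    case (single Q)
    then show ?thesis using single_unique[of A Q B] A B eq by simp
  next
    case (pair a p q r)
    note A_pair = this
    from B val[unfolded eq] show ?thesis
    proof (cases rule: X_free_factorisation_value_8_cases)
      case (single Q)
      then show ?thesis using single_unique[of B Q A] A B eq by simp
    next
      case (pair c p' q' r')
      then have "binom_exps a {#0, p, q, r#} = binom_exps c {#0, p', q', r'#}"
        using A_pair eq by (metis poly_of_mset_eq_iff)
      then have "a = c \<and> {#0, p, q, r#} = {#0, p', q', r'#}"
        using binom_exps_quartic_unique A_pair pair by blast
      then show ?thesis using A_pair pair by (simp del: poly_of_mset_add_mset)
    next
      case (triple b c d)
      then show ?thesis
        using binom_exps_quartic_ne_triple[of p q r b c d a] A_pair eq by (metis poly_of_mset_eq_iff)
    qed
  next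
    case (triple a b c)
    note A_triple = this
    from B val[unfolded eq] show ?thesis
    proof (cases rule: X_free_factorisation_value_8_cases)
      case (single Q)
      then show ?thesis using single_unique[of B Q A] A B eq by simp
    next
      case (pair e p q r)
      then show ?thesis
        using binom_exps_quartic_ne_triple[of p q r a b c e] A_triple eq by (metis poly_of_mset_eq_iff)
    next
      case (triple d e f)
      then have "binom_exps a (binom_exps b {#0, c#}) = binom_exps d (binom_exps e {#0, f#})"
        using A_triple eq by (metis poly_of_mset_eq_iff)
      then have "a = d \<and> b = e \<and> c = f" using binom_exps_triple_unique A_triple triple by blast
      then show ?thesis using A_triple triple by (simp del: poly_of_mset_add_mset)
    qed
  qed
qed

theorem mainTheorem10:
  fixes P :: "nat poly"
  assumes "poly P 1 = 8"
  shows "N1_unique_factorisation P"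
  unfolding N1_unique_factorisation_def
proof (intro allI impI)
  fix A B :: "nat poly multiset"
  assume irr: "\<forall>x\<in>#A. N1_irreducible x" "\<forall>x\<in>#B. N1_irreducible x"
    and PA: "prod_mset A = P" and PB: "prod_mset B = P"
  obtain n A' where A: "A = replicate_mset n (monom 1 1) + A'"
      "\<forall>x\<in>#A'. N1_irreducible x \<and> x \<noteq> monom 1 1"
      "prod_mset A = monom 1 n * prod_mset A'" "coeff (prod_mset A') 0 \<noteq> 0"
    using N1_factorisation_split_X[OF irr(1)] .
  obtain m B' where B: "B = replicate_mset m (monom 1 1) + B'"
      "\<forall>x\<in>#B'. N1_irreducible x \<and> x \<noteq> monom 1 1"
      "prod_mset B = monom 1 m * prod_mset B'" "coeff (prod_mset B') 0 \<noteq> 0"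
    using N1_factorisation_split_X[OF irr(2)] .
  have "n = m \<and> prod_mset A' = prod_mset B'"
    using A(3,4) B(3,4) PA PB by (intro monom_1_mult_cancel) simp_all
  moreover have "poly (prod_mset A') 1 = 8"
    using A(3) PA assms by (simp add: poly_monom)
  ultimately have "n = m" "A' = B'"
    using X_free_factorisation_value_8_unique[OF A(2) B(2)] by simp_all
  then show "A = B" using A(1) B(1) by simp
qed

end
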